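(* Let $n\in\mathbb{N}$ and let $u(x,t_r)$ be smooth on $\mathbb{R}^2$. Let $F_n(z,x,t_r)=\prod_{j=1}^n(z-\mu_j(x,t_r))$ and $H_n(z,x,t_r)=\prod_{j=1}^n(z-\nu_j(x,t_r))$, and suppose their constant coefficients (coefficients of $z^0$) are $f_n=\alpha e^{-iu}$ and $h_n=\beta e^{iu}$ with constants $\alpha,\beta$, where $\alpha\beta=\prod_{m=1}^{2n}E_m\neq0$ (the $E_m$ as in the context). Then $$u(x,t_r)=i\ln\Big((-1)^n\alpha^{-1}\prod_{j=1}^n\mu_j(x,t_r)\Big),\qquad u(x,t_r)=-i\ln\Big((-1)^n\beta^{-1}\prod_{j=1}^n\nu_j(x,t_r)\Big).$$
   Context: This is in the setting where $F_n$, $H_n$ and a polynomial $G_{n-1}$ (coefficients smooth in $(x,t_r)$) satisfy $F_{n,x}=-iu_xF_n-2izG_{n-1}$, $H_{n,x}=iu_xH_n+2izG_{n-1}$, $G_{n-1,x}=i(H_n-F_n)$ and $z^2G_{n-1}^2+zF_nH_n=\prod_{m=0}^{2n}(z-E_m)$ with $E_0=0$ and $E_m\neq0$ for $m=1,\dots,2n$. *)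

theory Defs
  imports "HOL-Analysis.Analysis"
begin

text \<open>Smoothness (C-infinity) of a function on the plane R^2 = real * real:
  f is smooth iff it is (Frechet) differentiable everywhere with partial
  derivatives fx, ft which are themselves smooth (coinductively).\<close>
coinductive smooth2 :: "(real \<times> real \<Rightarrow> 'a::real_normed_vector) \<Rightarrow> bool" where
  "(\<And>p. (f has_derivative (\<lambda>h. fst h *\<^sub>R fx p + snd h *\<^sub>R ft p)) (at p))
   \<Longrightarrow> smooth2 fx \<Longrightarrow> smooth2 ft \<Longrightarrow> smooth2 f"

end

theory Submission
  imports Defs
begin

text \<open>Evaluating F and H at z = 0 gives (-1)^n times the product of the mu_j as
  alpha e^(-iu), and (-1)^n times the product of the nu_j as beta e^(iu). Since
  alpha beta is the nonzero product of the E_m, both constants are invertible and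
  -iu, iu are logarithms of the required right-hand sides. Only these
  constant-coefficient identities are needed.\<close>

lemma exp_eq_of_constant_coeff:
  fixes a :: "nat \<Rightarrow> complex"
  assumes "(\<Prod>j=1..n. 0 - a j) = c * exp w" and "c \<noteq> 0"
  shows "exp w = (-1)^n * inverse c * (\<Prod>j=1..n. a j)"
proof -
  have "(\<Prod>j=1..n. 0 - a j) = (-1)^n * (\<Prod>j=1..n. a j)"
    by (simp add: prod_uminus)
  with assms show ?thesis
    by (simp add: field_simps)
qed

theorem lemma4p5:
  fixes n :: nat
    and u :: "real \<times> real \<Rightarrow> real"
    and ux :: "real \<Rightarrow> real \<Rightarrow> real"
    and \<mu> \<nu> :: "nat \<Rightarrow> real \<Rightarrow> real \<Rightarrow> complex"
    and g :: "nat \<Rightarrow> real \<times> real \<Rightarrow> complex"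
    and F H G :: "complex \<Rightarrow> real \<Rightarrow> real \<Rightarrow> complex"
    and E :: "nat \<Rightarrow> complex"
    and \<alpha> \<beta> :: complex
  assumes n_pos: "1 \<le> n"
    and u_smooth: "smooth2 u"
    and ux: "\<And>x t. ((\<lambda>y. u (y, t)) has_real_derivative ux x t) (at x)"
    and F_def: "\<And>z x t. F z x t = (\<Prod>j=1..n. z - \<mu> j x t)"
    and H_def: "\<And>z x t. H z x t = (\<Prod>j=1..n. z - \<nu> j x t)"
    and G_def: "\<And>z x t. G z x t = (\<Sum>k<n. g k (x, t) * z ^ k)"
    and g_smooth: "\<And>k. k < n \<Longrightarrow> smooth2 (g k)"
    and F_x: "\<And>z x t. ((\<lambda>y. F z y t) has_vector_derivative
               (- \<i> * of_real (ux x t) * F z x t - 2 * \<i> * z * G z x t)) (at x)"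
    and H_x: "\<And>z x t. ((\<lambda>y. H z y t) has_vector_derivative
               (\<i> * of_real (ux x t) * H z x t + 2 * \<i> * z * G z x t)) (at x)"
    and G_x: "\<And>z x t. ((\<lambda>y. G z y t) has_vector_derivative
               (\<i> * (H z x t - F z x t))) (at x)"
    and curve: "\<And>z x t. z\<^sup>2 * (G z x t)\<^sup>2 + z * F z x t * H z x t = (\<Prod>m=0..2*n. z - E m)"
    and E0: "E 0 = 0"
    and E_nz: "\<And>m. 1 \<le> m \<Longrightarrow> m \<le> 2*n \<Longrightarrow> E m \<noteq> 0"
    and f_const: "\<And>x t. F 0 x t = \<alpha> * exp (- \<i> * of_real (u (x, t)))"
    and h_const: "\<And>x t. H 0 x t = \<beta> * exp (\<i> * of_real (u (x, t)))"
    and alpha_beta: "\<alpha> * \<beta> = (\<Prod>m=1..2*n. E m)"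
    and prod_nz: "(\<Prod>m=1..2*n. E m) \<noteq> 0"
  shows "\<forall>x t.
      (\<exists>w. exp w = (-1)^n * inverse \<alpha> * (\<Prod>j=1..n. \<mu> j x t)
            \<and> of_real (u (x, t)) = \<i> * w)
    \<and> (\<exists>w. exp w = (-1)^n * inverse \<beta> * (\<Prod>j=1..n. \<nu> j x t)
            \<and> of_real (u (x, t)) = - \<i> * w)"
proof (intro allI conjI)
  fix x t
  have "\<alpha> \<noteq> 0" "\<beta> \<noteq> 0"
    using alpha_beta prod_nz by auto
  have "exp (- \<i> * of_real (u (x, t))) = (-1)^n * inverse \<alpha> * (\<Prod>j=1..n. \<mu> j x t)"
    using exp_eq_of_constant_coeff f_const F_def \<open>\<alpha> \<noteq> 0\<close> by metis
  then show "\<exists>w. exp w = (-1)^n * inverse \<alpha> * (\<Prod>j=1..n. \<mu> j x t)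
            \<and> of_real (u (x, t)) = \<i> * w"
    by (intro exI[of _ "- \<i> * of_real (u (x, t))"]) simp
  have "exp (\<i> * of_real (u (x, t))) = (-1)^n * inverse \<beta> * (\<Prod>j=1..n. \<nu> j x t)"
    using exp_eq_of_constant_coeff h_const H_def \<open>\<beta> \<noteq> 0\<close> by metis
  then show "\<exists>w. exp w = (-1)^n * inverse \<beta> * (\<Prod>j=1..n. \<nu> j x t)
            \<and> of_real (u (x, t)) = - \<i> * w"
    by (intro exI[of _ "\<i> * of_real (u (x, t))"]) simp
qed

end
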